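(* Let $A$ be a uniform algebra, let $\theta : A\to M_n(\mathbb{C})$ be a continuous unital homomorphism, and let $\alpha : A\to A$ be a unital antilinear contraction such that $$\theta_\alpha(f):=\tfrac12\bigl(\theta(f)+\theta(\alpha(f))^*\bigr)$$ satisfies $\|\theta_\alpha\|\le 1$. Then for every $f\in A$, $$W(\theta_\alpha(f))\subset \operatorname{conv}(\sigma(f)).$$
   Context: A uniform algebra is a norm-closed subalgebra of $C(X)$, for $X$ a compact Hausdorff space, containing the constants, with the supremum norm. A map $\alpha$ is antilinear if $\alpha(\lambda f+g)=\overline\lambda\alpha(f)+\alpha(g)$. It is a contraction if $\|\alpha(f)\|\le\|f\|$, and it is unital if $\alpha(1)=1$. $W(T)=\{\langle Tx,x\rangle:\|x\|=1\}$ denotes the numerical range of a matrix $T$. $\sigma(f)$ is the spectrum of $f$ as an element of $A$, and $\operatorname{conv}$ denotes convex hull. *)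

theory Defs
  imports "HOL-Analysis.Analysis"
begin

text \<open>The compact Hausdorff space X is the whole (t2) type 'x, assumed compact.
 Functions are elements of C(X) = continuous functions 'x => complex.\<close>

definition supnorm :: "('x::topological_space \<Rightarrow> complex) \<Rightarrow> real" where
  "supnorm f = (SUP x. cmod (f x))"

definition uniform_algebra :: "('x::topological_space \<Rightarrow> complex) set \<Rightarrow> bool" where
  "uniform_algebra A \<longleftrightarrow>
     (\<forall>f\<in>A. continuous_on UNIV f) \<and>
     (\<forall>c. (\<lambda>x. c) \<in> A) \<and>
     (\<forall>f\<in>A. \<forall>g\<in>A. (\<lambda>x. f x + g x) \<in> A) \<and>
     (\<forall>f\<in>A. \<forall>g\<in>A. (\<lambda>x. f x * g x) \<in> A) \<and>
     (\<forall>c. \<forall>f\<in>A. (\<lambda>x. c * f x) \<in> A) \<and>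
     (\<forall>f. continuous_on UNIV f \<and> (\<forall>e>0. \<exists>g\<in>A. supnorm (\<lambda>x. f x - g x) < e) \<longrightarrow> f \<in> A)"

definition ua_spectrum :: "('x::topological_space \<Rightarrow> complex) set \<Rightarrow> ('x \<Rightarrow> complex) \<Rightarrow> complex set" where
  "ua_spectrum A f = {c. \<not> (\<exists>g\<in>A. \<forall>x. (f x - c) * g x = 1)}"

definition mnorm :: "complex^'n^'n \<Rightarrow> real" where
  "mnorm T = onorm (\<lambda>v. T *v v)"

definition adjoint_mat :: "complex^'n^'n \<Rightarrow> complex^'n^'n" where
  "adjoint_mat T = (\<chi> i j. cnj (T $ j $ i))"

definition cinner :: "complex^'n \<Rightarrow> complex^'n \<Rightarrow> complex" where
  "cinner x y = (\<Sum>i\<in>UNIV. x $ i * cnj (y $ i))"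

definition numerical_range :: "complex^'n^'n \<Rightarrow> complex set" where
  "numerical_range T = {cinner (T *v x) x | x. norm x = 1}"

definition cmat_scale :: "complex \<Rightarrow> complex^'n^'n \<Rightarrow> complex^'n^'n" where
  "cmat_scale c T = (\<chi> i j. c * T $ i $ j)"

end

theory Submission
  imports Defs
begin

text \<open>If a closed disc D(c, r) contains f(X), then f - c lies in A with sup norm at most r, and
  the normalisation \<open>\<alpha> 1 = 1\<close>, \<open>\<theta> 1 = I\<close> gives \<open>\<theta>\<^sub>\<alpha>(f - c) = \<theta>\<^sub>\<alpha>(f) - c I\<close>. Hence every point
  of \<open>W(\<theta>\<^sub>\<alpha>(f)) - c = W(\<theta>\<^sub>\<alpha>(f - c))\<close> has modulus at most \<open>\<parallel>\<theta>\<^sub>\<alpha>(f - c)\<parallel> \<le> r\<close>, i.e.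
  \<open>W(\<theta>\<^sub>\<alpha>(f))\<close> lies in every closed disc containing f(X). For a compact set these discs cut out
  exactly its convex hull, and f(X) \<subseteq> \<sigma>(f).\<close>

lemma mem_convex_hull_if_in_every_cball:
  fixes K :: "'a::euclidean_space set"
  assumes "compact K" "K \<noteq> {}"
    and in_cball: "\<And>c r. K \<subseteq> cball c r \<Longrightarrow> z \<in> cball c r"
  shows "z \<in> convex hull K"
proof (rule ccontr)
  assume "z \<notin> convex hull K"
  moreover have "closed (convex hull K)"
    using \<open>compact K\<close> by (simp add: compact_convex_hull compact_imp_closed)
  ultimately obtain a b where "inner a z < b" and ab: "\<forall>x\<in>convex hull K. b < inner a x"
    using separating_hyperplane_closed_point[OF convex_convex_hull] by blast
  define \<delta> where "\<delta> = b - inner a z"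
  have "\<delta> > 0" using \<open>inner a z < b\<close> by (simp add: \<delta>_def)
  have sep: "\<delta> \<le> inner (k - z) a" if "k \<in> K" for k
  proof -
    have "b < inner a k" using ab hull_subset[of K convex] that by blast
    then show ?thesis by (simp add: \<delta>_def inner_diff_right inner_commute)
  qed
  obtain B where B: "\<And>k. k \<in> K \<Longrightarrow> dist z k \<le> B"
    using compact_imp_bounded[OF \<open>compact K\<close>] unfolding bounded_any_center[of K z] by blast
  txt \<open>Move the centre far out along the normal \<open>a\<close>: then K gets strictly closer to c than z.\<close>
  define t where "t = (B\<^sup>2 + 1) / \<delta>"
  define c where "c = z + t *\<^sub>R a"
  have "t > 0" using \<open>\<delta> > 0\<close> by (simp add: t_def add_nonneg_pos)
  have closer: "(dist k c)\<^sup>2 \<le> (dist z c)\<^sup>2 - 1" if "k \<in> K" for k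
  proof -
    have "(dist k c)\<^sup>2 = (norm (k - z))\<^sup>2 - 2 * t * inner (k - z) a + (norm (t *\<^sub>R a))\<^sup>2"
      using dot_norm_neg[of "k - z" "t *\<^sub>R a"] by (simp add: dist_norm c_def diff_diff_eq)
    also have "\<dots> \<le> B\<^sup>2 - 2 * t * \<delta> + (dist z c)\<^sup>2"
    proof -
      have "(norm (k - z))\<^sup>2 \<le> B\<^sup>2"
        using B[OF that] by (simp add: dist_norm norm_minus_commute power_mono)
      moreover have "t * \<delta> \<le> t * inner (k - z) a" using sep[OF that] \<open>t > 0\<close> by simp
      ultimately show ?thesis by (simp add: dist_norm c_def)
    qed
    also have "\<dots> \<le> (dist z c)\<^sup>2 - 1"
    proof -
      have "B\<^sup>2 - 2 * t * \<delta> = - B\<^sup>2 - 2" using \<open>\<delta> > 0\<close> by (simp add: t_def mult.assoc)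
      then show ?thesis using zero_le_power2[of B] by linarith
    qed
    finally show ?thesis .
  qed
  obtain k where "k \<in> K" using \<open>K \<noteq> {}\<close> by blast
  then have nonneg: "(dist z c)\<^sup>2 - 1 \<ge> 0" using closer[of k] zero_le_power2[of "dist k c"] by linarith
  have "K \<subseteq> cball c (sqrt ((dist z c)\<^sup>2 - 1))"
    using closer by (auto simp: dist_commute real_le_rsqrt)
  then have "dist z c \<le> sqrt ((dist z c)\<^sup>2 - 1)" using in_cball by (simp add: dist_commute)
  then have "(dist z c)\<^sup>2 \<le> (sqrt ((dist z c)\<^sup>2 - 1))\<^sup>2" by (simp add: power_mono)
  also have "\<dots> = (dist z c)\<^sup>2 - 1" using nonneg by simp
  finally show False by simp
qed

lemma uniform_algebra_const: "uniform_algebra A \<Longrightarrow> (\<lambda>x. c) \<in> A"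
  unfolding uniform_algebra_def by blast

lemma uniform_algebra_add: "uniform_algebra A \<Longrightarrow> f \<in> A \<Longrightarrow> g \<in> A \<Longrightarrow> (\<lambda>x. f x + g x) \<in> A"
  unfolding uniform_algebra_def by blast

lemma uniform_algebra_diff_const: "uniform_algebra A \<Longrightarrow> f \<in> A \<Longrightarrow> (\<lambda>x. f x - c) \<in> A"
  using uniform_algebra_add[OF _ _ uniform_algebra_const, of A f "- c"] by simp

lemma uniform_algebra_compact_range:
  assumes "uniform_algebra A" "f \<in> A" "compact (UNIV :: 'x::topological_space set)"
  shows "compact (range (f :: 'x \<Rightarrow> complex))"
proof -
  have "continuous_on UNIV f" using assms(1,2) unfolding uniform_algebra_def by blast
  then show ?thesis using assms(3) by (rule compact_continuous_image)
qed

lemma range_subset_ua_spectrum: "range f \<subseteq> ua_spectrum A f"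
  by (auto simp: ua_spectrum_def) (metis diff_self mult_zero_left zero_neq_one)

lemma supnorm_le: "(\<And>x. cmod (f x) \<le> r) \<Longrightarrow> supnorm f \<le> r"
  unfolding supnorm_def by (rule cSUP_least) auto

lemma Re_cinner: "Re (cinner x y) = inner x y"
  by (simp add: cinner_def inner_vec_def inner_complex_def)

lemma cinner_scale_left: "cinner (w *s x) y = w * cinner x y"
  by (simp add: cinner_def sum_distrib_left mult.assoc)

lemma cinner_self: "cinner x x = of_real ((norm x)\<^sup>2)"
proof -
  have "Im (cinner x x) = 0" by (simp add: cinner_def Im_sum)
  moreover have "Re (cinner x x) = (norm x)\<^sup>2" by (simp add: Re_cinner power2_norm_eq_inner)
  ultimately show ?thesis by (simp add: complex_eq_iff)
qed

lemma norm_cinner_le: "cmod (cinner x y) \<le> norm x * norm y"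
proof (cases "cinner x y = 0")
  case False
  txt \<open>Rotate x by a unimodular w making \<open>cinner (w x) y\<close> real; the real Cauchy-Schwarz does the rest.\<close>
  define w where "w = cnj (sgn (cinner x y))"
  have "cmod w = 1" using False by (simp add: w_def norm_sgn)
  have "w * cinner x y = cnj (cinner x y) * cinner x y / of_real (cmod (cinner x y))"
    by (simp add: w_def sgn_eq)
  also have "\<dots> = of_real (cmod (cinner x y))"
    using False by (simp add: complex_norm_square[symmetric] mult.commute power2_eq_square)
  finally have "w * cinner x y = of_real (cmod (cinner x y))" .
  then have "cmod (cinner x y) = inner (w *s x) y"
    by (metis Re_cinner cinner_scale_left Re_complex_of_real)
  also have "\<dots> \<le> norm (w *s x) * norm y" by (rule norm_cauchy_schwarz)
  also have "\<dots> = norm x * norm y" using \<open>cmod w = 1\<close> by (simp add: norm_vec_def norm_mult)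
  finally show ?thesis .
qed simp

lemma norm_matrix_vector_mult_le_mnorm: "norm (T *v x) \<le> mnorm T * norm x"
  unfolding mnorm_def by (rule onorm[OF matrix_vector_mul_bounded_linear])

lemma norm_le_mnorm_if_in_numerical_range:
  assumes "w \<in> numerical_range T"
  shows "cmod w \<le> mnorm T"
proof -
  obtain x where "norm x = 1" and w: "w = cinner (T *v x) x"
    using assms by (auto simp: numerical_range_def)
  have "cmod w \<le> norm (T *v x) * norm x" unfolding w by (rule norm_cinner_le)
  also have "\<dots> \<le> mnorm T" using norm_matrix_vector_mult_le_mnorm[of T x] \<open>norm x = 1\<close> by simp
  finally show ?thesis .
qed

lemma numerical_range_diff_identity:
  assumes "w \<in> numerical_range T"
  shows "w - c \<in> numerical_range (T - cmat_scale c (mat 1))"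
proof -
  obtain x where "norm x = 1" and w: "w = cinner (T *v x) x"
    using assms by (auto simp: numerical_range_def)
  have "(T $ i $ j - c * (if i = j then 1 else 0)) * x $ j
        = T $ i $ j * x $ j - (if i = j then c * x $ j else 0)" for i j
    by (simp add: algebra_simps)
  then have shifted: "(T - cmat_scale c (mat 1)) *v x = T *v x - c *s x"
    by (simp add: vec_eq_iff matrix_vector_mult_def cmat_scale_def mat_def sum_subtractf)
  have "cinner ((T - cmat_scale c (mat 1)) *v x) x = w - c * cinner x x"
    unfolding shifted w cinner_def by (simp add: sum_subtractf sum_distrib_left algebra_simps)
  then have "cinner ((T - cmat_scale c (mat 1)) *v x) x = w - c"
    using \<open>norm x = 1\<close> by (simp add: cinner_self)
  then show ?thesis using \<open>norm x = 1\<close> by (auto simp: numerical_range_def intro!: exI[of _ x])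
qed

lemma half_sum_adjoint_identity_shift:
  "cmat_scale (1/2) (S + cmat_scale (- c) (mat 1) + adjoint_mat (cmat_scale (- cnj c) (mat 1) + R))
     = cmat_scale (1/2) (S + adjoint_mat R) - cmat_scale c (mat 1)"
  by (simp add: vec_eq_iff cmat_scale_def adjoint_mat_def mat_def algebra_simps)

lemma half_sum_adjoint_diff_const:
  fixes \<theta> :: "('x::topological_space \<Rightarrow> complex) \<Rightarrow> complex^'n^'n"
  assumes A: "uniform_algebra A" and "f \<in> A"
    and \<theta>_add: "\<And>f g. f \<in> A \<Longrightarrow> g \<in> A \<Longrightarrow> \<theta> (\<lambda>x. f x + g x) = \<theta> f + \<theta> g"
    and \<theta>_scale: "\<And>c f. f \<in> A \<Longrightarrow> \<theta> (\<lambda>x. c * f x) = cmat_scale c (\<theta> f)"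
    and \<theta>_unital: "\<theta> (\<lambda>x. 1) = mat 1"
    and \<alpha>_maps: "\<And>f. f \<in> A \<Longrightarrow> \<alpha> f \<in> A"
    and \<alpha>_antilinear: "\<And>c f g. f \<in> A \<Longrightarrow> g \<in> A \<Longrightarrow>
                 \<alpha> (\<lambda>x. c * f x + g x) = (\<lambda>x. cnj c * \<alpha> f x + \<alpha> g x)"
    and \<alpha>_unital: "\<alpha> (\<lambda>x. 1) = (\<lambda>x. 1)"
  shows "cmat_scale (1/2) (\<theta> (\<lambda>x. f x - c) + adjoint_mat (\<theta> (\<alpha> (\<lambda>x. f x - c))))
           = cmat_scale (1/2) (\<theta> f + adjoint_mat (\<theta> (\<alpha> f))) - cmat_scale c (mat 1)"
proof -
  note const = uniform_algebra_const[OF A]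
  have "\<theta> (\<lambda>x. f x - c) = \<theta> (\<lambda>x. f x + - c * 1)" by simp
  also have "\<dots> = \<theta> f + cmat_scale (- c) (mat 1)"
    unfolding \<theta>_add[OF \<open>f \<in> A\<close> const] \<theta>_scale[OF const] \<theta>_unital ..
  finally have \<theta>_shift: "\<theta> (\<lambda>x. f x - c) = \<theta> f + cmat_scale (- c) (mat 1)" .
  have "\<alpha> (\<lambda>x. f x - c) = \<alpha> (\<lambda>x. - c * 1 + f x)" by simp
  also have "\<dots> = (\<lambda>x. - cnj c * 1 + \<alpha> f x)"
    unfolding \<alpha>_antilinear[OF const \<open>f \<in> A\<close>] \<alpha>_unital by simp
  finally have "\<theta> (\<alpha> (\<lambda>x. f x - c)) = \<theta> (\<lambda>x. - cnj c * 1 + \<alpha> f x)" by (rule arg_cong)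
  also have "\<dots> = cmat_scale (- cnj c) (mat 1) + \<theta> (\<alpha> f)"
    unfolding \<theta>_add[OF const \<alpha>_maps[OF \<open>f \<in> A\<close>]] \<theta>_scale[OF const] \<theta>_unital ..
  finally show ?thesis by (simp add: \<theta>_shift half_sum_adjoint_identity_shift)
qed

theorem lemma5p2:
  fixes A :: "('x::t2_space \<Rightarrow> complex) set"
    and \<theta> :: "('x \<Rightarrow> complex) \<Rightarrow> complex^'n^'n"
    and \<alpha> :: "('x \<Rightarrow> complex) \<Rightarrow> ('x \<Rightarrow> complex)"
  assumes X_compact: "compact (UNIV :: 'x set)"
    and A: "uniform_algebra A"
    and \<theta>_add: "\<And>f g. f \<in> A \<Longrightarrow> g \<in> A \<Longrightarrow> \<theta> (\<lambda>x. f x + g x) = \<theta> f + \<theta> g"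
    and \<theta>_scale: "\<And>c f. f \<in> A \<Longrightarrow> \<theta> (\<lambda>x. c * f x) = cmat_scale c (\<theta> f)"
    and \<theta>_mult: "\<And>f g. f \<in> A \<Longrightarrow> g \<in> A \<Longrightarrow> \<theta> (\<lambda>x. f x * g x) = \<theta> f ** \<theta> g"
    and \<theta>_unital: "\<theta> (\<lambda>x. 1) = mat 1"
    and \<theta>_cont: "\<And>f e. f \<in> A \<Longrightarrow> e > 0 \<Longrightarrow>
                 \<exists>d>0. \<forall>g\<in>A. supnorm (\<lambda>x. g x - f x) < d \<longrightarrow> mnorm (\<theta> g - \<theta> f) < e"
    and \<alpha>_maps: "\<And>f. f \<in> A \<Longrightarrow> \<alpha> f \<in> A"
    and \<alpha>_antilinear: "\<And>c f g. f \<in> A \<Longrightarrow> g \<in> A \<Longrightarrow>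
                 \<alpha> (\<lambda>x. c * f x + g x) = (\<lambda>x. cnj c * \<alpha> f x + \<alpha> g x)"
    and \<alpha>_contr: "\<And>f. f \<in> A \<Longrightarrow> supnorm (\<alpha> f) \<le> supnorm f"
    and \<alpha>_unital: "\<alpha> (\<lambda>x. 1) = (\<lambda>x. 1)"
    and \<theta>\<alpha>_norm: "\<And>f. f \<in> A \<Longrightarrow>
                 mnorm (cmat_scale (1/2) (\<theta> f + adjoint_mat (\<theta> (\<alpha> f)))) \<le> supnorm f"
  shows "\<forall>f\<in>A. numerical_range (cmat_scale (1/2) (\<theta> f + adjoint_mat (\<theta> (\<alpha> f))))
                \<subseteq> convex hull (ua_spectrum A f)"
proof (intro ballI subsetI)
  fix f z
  assume "f \<in> A"
    and z: "z \<in> numerical_range (cmat_scale (1/2) (\<theta> f + adjoint_mat (\<theta> (\<alpha> f))))"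
  have "z \<in> convex hull (range f)"
  proof (rule mem_convex_hull_if_in_every_cball)
    show "compact (range f)" by (rule uniform_algebra_compact_range[OF A \<open>f \<in> A\<close> X_compact])
  next
    fix c r
    assume "range f \<subseteq> cball c r"
    then have "dist c (f x) \<le> r" for x by (auto simp: image_subset_iff)
    then have sup_le: "supnorm (\<lambda>x. f x - c) \<le> r"
      by (intro supnorm_le) (simp add: dist_norm norm_minus_commute)
    let ?T = "cmat_scale (1/2) (\<theta> (\<lambda>x. f x - c) + adjoint_mat (\<theta> (\<alpha> (\<lambda>x. f x - c))))"
    have "?T = cmat_scale (1/2) (\<theta> f + adjoint_mat (\<theta> (\<alpha> f))) - cmat_scale c (mat 1)"
      by (rule half_sum_adjoint_diff_const[OF A \<open>f \<in> A\<close> \<theta>_add \<theta>_scale \<theta>_unital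
          \<alpha>_maps \<alpha>_antilinear \<alpha>_unital])
    then have "z - c \<in> numerical_range ?T"
      using numerical_range_diff_identity[OF z] by simp
    then have "cmod (z - c) \<le> mnorm ?T" by (rule norm_le_mnorm_if_in_numerical_range)
    also have "\<dots> \<le> supnorm (\<lambda>x. f x - c)"
      using uniform_algebra_diff_const[OF A \<open>f \<in> A\<close>] by (rule \<theta>\<alpha>_norm)
    also have "\<dots> \<le> r" by (fact sup_le)
    finally show "z \<in> cball c r" by (simp add: dist_norm norm_minus_commute)
  qed simp
  then show "z \<in> convex hull (ua_spectrum A f)"
    using hull_mono[OF range_subset_ua_spectrum] ..
qed

end
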